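(* Let $(\Omega,\mathcal{F})$ be a measurable space, $\mathrm{B}_b$ the space of bounded real-valued measurable functions on $\Omega$, and let $H\colon\mathrm{B}_b\to\mathbb{R}$ be a convex premium principle which is continuous from above, i.e. $\inf_{n\in\mathbb{N}}H(X_n)=0$ for every sequence $(X_n)_{n\in\mathbb{N}}\subset\mathrm{B}_b$ with $X_{n+1}\le X_n$ for all $n$ and $\inf_{n}X_n=0$ pointwise. Then $R_{\mathrm{Max}}(X):=\inf\{H(X_0)\mid X_0\in\mathrm{B}_b,\ X_0\ge X\}$ is continuous from above in the same sense, and every element of $\mathcal{P}:=\{\mathbb{P}\in\mathrm{ba}_+^1\mid H^*(\mathbb{P})<\infty\}$ is countably additive.
   Context: A premium principle is a map $H\colon\mathrm{B}_b\to\mathbb{R}$ with $H(X+m)=H(X)+m$ for $m\in\mathbb{R}$, $H(0)=0$, and $H(X)\ge0$ for $X\ge0$ (pointwise order). Convex means $H(\lambda X+(1-\lambda)Y)\le\lambda H(X)+(1-\lambda)H(Y)$ for $\lambda\in[0,1]$. $\mathrm{ba}_+^1$ is the set of finitely additive probability measures on $(\Omega,\mathcal{F})$, $\mathbb{E}_{\mathbb{P}}$ the associated integral, and $H^*(\mathbb{P}):=\sup_{X\in\mathrm{B}_b}(\mathbb{E}_{\mathbb{P}}(X)-H(X))$. *)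

theory Defs
  imports "HOL-Analysis.Analysis"
begin

definition Bb :: "'a measure \<Rightarrow> ('a \<Rightarrow> real) set" where
  "Bb M = {X. X \<in> borel_measurable M \<and> bounded (X ` space M)}"

definition premium_principle :: "'a measure \<Rightarrow> (('a \<Rightarrow> real) \<Rightarrow> real) \<Rightarrow> bool" where
  "premium_principle M H \<longleftrightarrow>
     (\<forall>X\<in>Bb M. \<forall>m::real. H (\<lambda>x. X x + m) = H X + m) \<and>
     H (\<lambda>x. 0) = 0 \<and>
     (\<forall>X\<in>Bb M. (\<forall>x\<in>space M. X x \<ge> 0) \<longrightarrow> H X \<ge> 0)"

definition convex_on_Bb :: "'a measure \<Rightarrow> (('a \<Rightarrow> real) \<Rightarrow> real) \<Rightarrow> bool" where
  "convex_on_Bb M H \<longleftrightarrow>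
     (\<forall>X\<in>Bb M. \<forall>Y\<in>Bb M. \<forall>l::real. 0 \<le> l \<and> l \<le> 1 \<longrightarrow>
        H (\<lambda>x. l * X x + (1 - l) * Y x) \<le> l * H X + (1 - l) * H Y)"

text \<open>Continuity from above: for every pointwise decreasing sequence in Bb M
  with pointwise infimum 0, the infimum of the values is 0.  (The pointwise
  infimum being 0 entails that all terms are nonnegative; we state this explicitly
  so that the real-valued INF is meaningful.)\<close>
definition cont_from_above :: "'a measure \<Rightarrow> (('a \<Rightarrow> real) \<Rightarrow> real) \<Rightarrow> bool" where
  "cont_from_above M H \<longleftrightarrow>
     (\<forall>Xs :: nat \<Rightarrow> 'a \<Rightarrow> real.
        (\<forall>n. Xs n \<in> Bb M) \<and>
        (\<forall>n. \<forall>x\<in>space M. Xs (Suc n) x \<le> Xs n x) \<and>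
        (\<forall>x\<in>space M. (\<forall>n. 0 \<le> Xs n x) \<and> (INF n. Xs n x) = 0)
        \<longrightarrow> (INF n. H (Xs n)) = 0)"

definition R_Max :: "'a measure \<Rightarrow> (('a \<Rightarrow> real) \<Rightarrow> real) \<Rightarrow> ('a \<Rightarrow> real) \<Rightarrow> real" where
  "R_Max M H X = Inf {H X0 | X0. X0 \<in> Bb M \<and> (\<forall>x\<in>space M. X0 x \<ge> X x)}"

definition ba1 :: "'a measure \<Rightarrow> ('a set \<Rightarrow> real) set" where
  "ba1 M = {P. (\<forall>A\<in>sets M. 0 \<le> P A) \<and> P (space M) = 1 \<and>
     (\<forall>A\<in>sets M. \<forall>B\<in>sets M. A \<inter> B = {} \<longrightarrow> P (A \<union> B) = P A + P B)}"

definition simple_Bb :: "'a measure \<Rightarrow> ('a \<Rightarrow> real) set" where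
  "simple_Bb M = {s. s \<in> borel_measurable M \<and> finite (s ` space M)}"

definition simple_int :: "'a measure \<Rightarrow> ('a set \<Rightarrow> real) \<Rightarrow> ('a \<Rightarrow> real) \<Rightarrow> real" where
  "simple_int M P s = (\<Sum>c\<in>s ` space M. c * P (s -` {c} \<inter> space M))"

definition E_fa :: "'a measure \<Rightarrow> ('a set \<Rightarrow> real) \<Rightarrow> ('a \<Rightarrow> real) \<Rightarrow> real" where
  "E_fa M P X = (SUP s\<in>{s\<in>simple_Bb M. \<forall>x\<in>space M. s x \<le> X x}. simple_int M P s)"

definition conj_H :: "'a measure \<Rightarrow> (('a \<Rightarrow> real) \<Rightarrow> real) \<Rightarrow> ('a set \<Rightarrow> real) \<Rightarrow> ereal" where
  "conj_H M H P = (SUP X\<in>Bb M. ereal (E_fa M P X - H X))"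

definition countably_additive_fa :: "'a measure \<Rightarrow> ('a set \<Rightarrow> real) \<Rightarrow> bool" where
  "countably_additive_fa M P \<longleftrightarrow>
     (\<forall>A :: nat \<Rightarrow> 'a set. range A \<subseteq> sets M \<longrightarrow> disjoint_family A \<longrightarrow>
        (\<lambda>n. P (A n)) sums P (\<Union>n. A n))"

end

(*
  On nonnegative functions R_Max is squeezed between 0 and H, so it inherits continuity
  from above.  If c = H^*(P) < \<infinity>, then for every event D and every l \<ge> 0,
  l P(D) \<le> E_P(l 1_D) \<le> c + H(l 1_D).  Along a decreasing sequence of events D_m with
  empty intersection, continuity from above of H makes H(l 1_{D_m}) < 1 for some m, hence
  P(D_m) < (c + 1)/l, with l arbitrary.  So P is continuous at the empty set, which for a
  finitely additive probability is countable additivity.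
*)
theory Submission
  imports Defs
begin

lemma premium_principle_nonneg:
  assumes "premium_principle M H" "X \<in> Bb M" "\<forall>x\<in>space M. 0 \<le> X x"
  shows "0 \<le> H X"
  using assms unfolding premium_principle_def by blast

lemma ba1_nonneg: "P \<in> ba1 M \<Longrightarrow> A \<in> sets M \<Longrightarrow> 0 \<le> P A"
  unfolding ba1_def by blast

lemma ba1_space: "P \<in> ba1 M \<Longrightarrow> P (space M) = 1"
  unfolding ba1_def by blast

lemma ba1_additive:
  "P \<in> ba1 M \<Longrightarrow> A \<in> sets M \<Longrightarrow> B \<in> sets M \<Longrightarrow> A \<inter> B = {} \<Longrightarrow> P (A \<union> B) = P A + P B"
  unfolding ba1_def by blast

lemma ba1_empty: "P \<in> ba1 M \<Longrightarrow> P {} = 0"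
  using ba1_additive[of P M "{}" "{}"] by simp

lemma ba1_mono:
  assumes "P \<in> ba1 M" "A \<in> sets M" "B \<in> sets M" "A \<subseteq> B"
  shows "P A \<le> P B"
proof -
  have "P (A \<union> (B - A)) = P A + P (B - A)"
    using assms(1-3) by (intro ba1_additive) auto
  moreover have "A \<union> (B - A) = B"
    using assms(4) by blast
  ultimately show ?thesis
    using ba1_nonneg[OF assms(1), of "B - A"] assms(2,3) by auto
qed

lemma ba1_finite_additive:
  assumes P: "P \<in> ba1 M" and "finite I" "A ` I \<subseteq> sets M" "disjoint_family_on A I"
  shows "P (\<Union>i\<in>I. A i) = (\<Sum>i\<in>I. P (A i))"
  using assms(2-)
proof (induction I rule: finite_induct)
  case empty
  then show ?case using ba1_empty[OF P] by simp
next
  case (insert a I)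
  have "A a \<inter> (\<Union>i\<in>I. A i) = {}"
    using insert.hyps(2) insert.prems(2) unfolding disjoint_family_on_def by auto
  moreover have "(\<Union>i\<in>I. A i) \<in> sets M"
    using insert.hyps(1) insert.prems(1) by auto
  ultimately have "P (\<Union>i\<in>insert a I. A i) = P (A a) + P (\<Union>i\<in>I. A i)"
    using ba1_additive[OF P, of "A a" "\<Union>i\<in>I. A i"] insert.prems(1) by simp
  also have "P (\<Union>i\<in>I. A i) = (\<Sum>i\<in>I. P (A i))"
    using insert by (auto intro: disjoint_family_on_mono)
  finally show ?case using insert.hyps by simp
qed

lemma ba1_empty_continuous_imp_countably_additive:
  assumes P: "P \<in> ba1 M"
    and cont: "\<And>D. range D \<subseteq> sets M \<Longrightarrow> decseq D \<Longrightarrow> (\<Inter>m. D m) = {} \<Longrightarrow>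
                    (\<lambda>m. P (D m)) \<longlonglongrightarrow> 0"
  shows "countably_additive_fa M P"
  unfolding countably_additive_fa_def
proof (intro allI impI)
  fix A :: "nat \<Rightarrow> 'a set"
  assume A: "range A \<subseteq> sets M" and disj: "disjoint_family A"
  define U where "U = (\<Union>n. A n)"
  define T where "T m = U - (\<Union>n<m. A n)" for m
  have init: "(\<Union>n<m. A n) \<in> sets M" for m
    using A by auto
  have T: "T m \<in> sets M" for m
    using A init unfolding T_def U_def by auto
  have split: "P U = (\<Sum>n<m. P (A n)) + P (T m)" for m
  proof -
    have "U = (\<Union>n<m. A n) \<union> T m" "(\<Union>n<m. A n) \<inter> T m = {}"
      unfolding T_def U_def by auto
    then have "P U = P (\<Union>n<m. A n) + P (T m)"
      using ba1_additive[OF P init T] by simp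
    then show ?thesis
      using ba1_finite_additive[OF P finite_lessThan, of A m] A disj
      by (auto intro: disjoint_family_on_mono)
  qed
  have "decseq T"
    unfolding T_def decseq_def by auto
  moreover have "(\<Inter>m. T m) = {}"
    unfolding T_def U_def by (auto simp: lessThan_iff)
  ultimately have "(\<lambda>m. P (T m)) \<longlonglongrightarrow> 0"
    using cont T by blast
  then have "(\<lambda>m. P U - P (T m)) \<longlonglongrightarrow> P U - 0"
    by (intro tendsto_diff tendsto_const)
  moreover have "P U - P (T m) = (\<Sum>n<m. P (A n))" for m
    using split[of m] by simp
  ultimately show "(\<lambda>n. P (A n)) sums P (\<Union>n. A n)"
    unfolding sums_def U_def by simp
qed

lemma scaled_indicator_simple_Bb:
  assumes "D \<in> sets M"
  shows "(\<lambda>x. l * indicator D x) \<in> simple_Bb M"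
proof -
  have "(\<lambda>x. l * indicator D x :: real) ` space M \<subseteq> {0, l}"
    by (auto simp: indicator_def)
  then show ?thesis
    using assms unfolding simple_Bb_def by (auto intro: finite_subset)
qed

lemma simple_Bb_subset_Bb: "simple_Bb M \<subseteq> Bb M"
  unfolding simple_Bb_def Bb_def by (auto intro: finite_imp_bounded)

lemma simple_int_le:
  assumes P: "P \<in> ba1 M" and s: "s \<in> simple_Bb M" and le: "\<forall>x\<in>space M. s x \<le> b"
  shows "simple_int M P s \<le> b"
proof -
  let ?C = "\<lambda>c. s -` {c} \<inter> space M"
  have fin: "finite (s ` space M)" and C: "\<And>c. ?C c \<in> sets M"
    using s unfolding simple_Bb_def by (auto simp: measurable_sets)
  have "simple_int M P s \<le> (\<Sum>c\<in>s ` space M. b * P (?C c))"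
    unfolding simple_int_def
    using le ba1_nonneg[OF P C] by (intro sum_mono mult_right_mono) auto
  also have "\<dots> = b * P (\<Union>c\<in>s ` space M. ?C c)"
    unfolding sum_distrib_left[symmetric]
    using C by (subst ba1_finite_additive[OF P fin]) (auto simp: disjoint_family_on_def)
  also have "(\<Union>c\<in>s ` space M. ?C c) = space M"
    by auto
  finally show ?thesis
    using ba1_space[OF P] by simp
qed

lemma simple_int_le_E_fa:
  assumes P: "P \<in> ba1 M" and X: "X \<in> Bb M"
    and s: "s \<in> simple_Bb M" "\<forall>x\<in>space M. s x \<le> X x"
  shows "simple_int M P s \<le> E_fa M P X"
proof -
  have "bdd_above (X ` space M)"
    using X unfolding Bb_def by (simp add: bounded_imp_bdd_above)
  then obtain b where b: "\<forall>x\<in>space M. X x \<le> b"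
    by (auto simp: bdd_above_def)
  have "simple_int M P t \<le> b" if "t \<in> simple_Bb M" "\<forall>x\<in>space M. t x \<le> X x" for t
    using simple_int_le[OF P that(1)] that(2) b by force
  then have "bdd_above (simple_int M P ` {s \<in> simple_Bb M. \<forall>x\<in>space M. s x \<le> X x})"
    by (intro bdd_aboveI2[where M = b]) blast
  then show ?thesis
    unfolding E_fa_def using s by (intro cSUP_upper) auto
qed

lemma simple_int_eq_sum_superset:
  assumes P: "P \<in> ba1 M" and "finite C" "s ` space M \<subseteq> C"
  shows "simple_int M P s = (\<Sum>c\<in>C. c * P (s -` {c} \<inter> space M))"
proof -
  have "s -` {c} \<inter> space M = {}" if "c \<notin> s ` space M" for c
    using that by auto
  then show ?thesis
    unfolding simple_int_def using assms(2,3) ba1_empty[OF P]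
    by (intro sum.mono_neutral_left) auto
qed

lemma simple_int_scaled_indicator:
  assumes P: "P \<in> ba1 M" and D: "D \<in> sets M"
  shows "simple_int M P (\<lambda>x. l * indicator D x) = l * P D"
proof (cases "l = 0")
  case True
  then show ?thesis
    unfolding simple_int_def by (auto intro: sum.neutral)
next
  case False
  have "D \<subseteq> space M"
    using D sets.sets_into_space by blast
  then have "(\<lambda>x. l * indicator D x :: real) -` {l} \<inter> space M = D"
    using False by (auto simp: indicator_def split: if_splits)
  moreover have "(\<lambda>x. l * indicator D x :: real) ` space M \<subseteq> {0, l}"
    by (auto simp: indicator_def)
  ultimately show ?thesis
    using simple_int_eq_sum_superset[OF P, of "{0, l}"] False by simp
qed

lemma E_fa_scaled_indicator_ge:
  assumes "P \<in> ba1 M" "D \<in> sets M"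
  shows "l * P D \<le> E_fa M P (\<lambda>x. l * indicator D x)"
proof -
  have "(\<lambda>x. l * indicator D x) \<in> simple_Bb M"
    using assms(2) by (rule scaled_indicator_simple_Bb)
  then show ?thesis
    using simple_int_le_E_fa[OF assms(1)] simple_int_scaled_indicator[OF assms]
      simple_Bb_subset_Bb by fastforce
qed

text \<open>If \<open>H\<^sup>*(P) = -\<infinity>\<close> then \<open>Bb M\<close> is empty and the junk value \<open>real_of_ereal (-\<infinity>) = 0\<close>
  is harmless.\<close>
lemma E_fa_minus_le_conj_H:
  assumes "conj_H M H P < \<infinity>" "X \<in> Bb M"
  shows "E_fa M P X - H X \<le> real_of_ereal (conj_H M H P)"
proof -
  have "ereal (E_fa M P X - H X) \<le> conj_H M H P"
    unfolding conj_H_def using assms(2) by (rule SUP_upper)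
  then show ?thesis
    using assms(1) by (cases "conj_H M H P") auto
qed

lemma cont_from_above_scaled_indicators:
  assumes "cont_from_above M H" "0 \<le> l"
    and D: "range D \<subseteq> sets M" "decseq D" "(\<Inter>m. D m) = {}"
  shows "(INF m. H (\<lambda>x. l * indicator (D m) x)) = 0"
proof -
  have "(INF m. l * indicator (D m) x) = (0::real)" for x
  proof -
    obtain m where "x \<notin> D m"
      using D(3) by auto
    then have "0 \<in> range (\<lambda>m. l * indicator (D m) x :: real)"
      by (auto intro!: image_eqI[where x = m])
    then show ?thesis
      using \<open>0 \<le> l\<close> by (intro cInf_eq_minimum) auto
  qed
  moreover have "(\<lambda>x. l * indicator (D m) x) \<in> Bb M" for m
    using scaled_indicator_simple_Bb simple_Bb_subset_Bb D(1) by blast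
  moreover have "l * indicator (D (Suc m)) x \<le> (l * indicator (D m) x :: real)" for m x
    using \<open>decseq D\<close> \<open>0 \<le> l\<close> by (auto simp: decseq_Suc_iff indicator_def)
  ultimately show ?thesis
    using assms(1,2) unfolding cont_from_above_def by simp
qed

lemma ba1_empty_continuous_if_conj_H_finite:
  assumes H_nonneg: "\<And>X. X \<in> Bb M \<Longrightarrow> \<forall>x\<in>space M. 0 \<le> X x \<Longrightarrow> 0 \<le> H X"
    and H: "cont_from_above M H"
    and P: "P \<in> ba1 M" "conj_H M H P < \<infinity>"
    and D: "range D \<subseteq> sets M" "decseq D" "(\<Inter>m. D m) = {}"
  shows "(\<lambda>m. P (D m)) \<longlonglongrightarrow> 0"
proof (rule order_tendstoI)
  fix e :: real
  assume "e < 0"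
  have "e < P (D m)" for m
    using \<open>e < 0\<close> ba1_nonneg[OF P(1)] D(1) by (meson less_le_trans rangeI subsetD)
  then show "\<forall>\<^sub>F m in sequentially. e < P (D m)"
    by simp
next
  fix e :: real
  assume "0 < e"
  define c where "c = real_of_ereal (conj_H M H P)"
  define l where "l = (\<bar>c\<bar> + 1) / e"
  have "0 < l"
    unfolding l_def using \<open>0 < e\<close> by (simp add: add_pos_nonneg)
  let ?X = "\<lambda>m x. l * indicator (D m) x :: real"
  have X: "?X m \<in> Bb M" for m
    using scaled_indicator_simple_Bb simple_Bb_subset_Bb D(1) by blast
  have "bdd_below (range (\<lambda>m. H (?X m)))"
    using H_nonneg[OF X] \<open>0 < l\<close> by (intro bdd_belowI2[where m = 0]) auto
  moreover have "(INF m. H (?X m)) < 1"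
    using cont_from_above_scaled_indicators[OF H] \<open>0 < l\<close> D by simp
  ultimately obtain m where "H (?X m) < 1"
    by (auto simp: cINF_less_iff)
  moreover have "l * P (D m) \<le> E_fa M P (?X m)"
    using E_fa_scaled_indicator_ge[OF P(1)] D(1) by blast
  moreover have "E_fa M P (?X m) \<le> c + H (?X m)"
    using E_fa_minus_le_conj_H[OF P(2) X] unfolding c_def by (simp add: algebra_simps)
  ultimately have "l * P (D m) < l * e"
    using \<open>0 < e\<close> unfolding l_def by simp
  then have "P (D m) < e"
    using \<open>0 < l\<close> by simp
  moreover have "P (D n) \<le> P (D m)" if "m \<le> n" for n
    using ba1_mono[OF P(1)] D(1,2) that by (auto simp: decseq_def)
  ultimately show "\<forall>\<^sub>F n in sequentially. P (D n) < e"
    by (auto simp: eventually_sequentially intro: le_less_trans)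
qed

lemma R_Max_nonneg_le:
  assumes H_nonneg: "\<And>X. X \<in> Bb M \<Longrightarrow> \<forall>x\<in>space M. 0 \<le> X x \<Longrightarrow> 0 \<le> H X"
    and X: "X \<in> Bb M" "\<forall>x\<in>space M. 0 \<le> X x"
  shows "0 \<le> R_Max M H X" "R_Max M H X \<le> H X"
proof -
  let ?S = "{H X0 | X0. X0 \<in> Bb M \<and> (\<forall>x\<in>space M. X0 x \<ge> X x)}"
  have S: "H X \<in> ?S"
    using X by auto
  have S_nonneg: "0 \<le> y" if y: "y \<in> ?S" for y
  proof -
    obtain X0 where X0: "y = H X0" "X0 \<in> Bb M" "\<forall>x\<in>space M. X x \<le> X0 x"
      using y by blast
    then have "\<forall>x\<in>space M. 0 \<le> X0 x"
      using X(2) by (auto intro: order_trans)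
    then show ?thesis
      using H_nonneg X0 by simp
  qed
  show "0 \<le> R_Max M H X"
    unfolding R_Max_def using S S_nonneg by (intro cInf_greatest) auto
  show "R_Max M H X \<le> H X"
    unfolding R_Max_def using S S_nonneg by (intro cInf_lower bdd_belowI)
qed

lemma cont_from_above_R_Max:
  assumes H_nonneg: "\<And>X. X \<in> Bb M \<Longrightarrow> \<forall>x\<in>space M. 0 \<le> X x \<Longrightarrow> 0 \<le> H X"
    and H: "cont_from_above M H"
  shows "cont_from_above M (R_Max M H)"
  unfolding cont_from_above_def
proof (intro allI impI)
  fix Xs :: "nat \<Rightarrow> 'a \<Rightarrow> real"
  assume Xs: "(\<forall>n. Xs n \<in> Bb M) \<and> (\<forall>n. \<forall>x\<in>space M. Xs (Suc n) x \<le> Xs n x) \<and>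
              (\<forall>x\<in>space M. (\<forall>n. 0 \<le> Xs n x) \<and> (INF n. Xs n x) = 0)"
  have R: "0 \<le> R_Max M H (Xs n)" "R_Max M H (Xs n) \<le> H (Xs n)" for n
    using R_Max_nonneg_le[of M H "Xs n", OF H_nonneg] Xs by blast+
  have "(INF n. R_Max M H (Xs n)) \<le> (INF n. H (Xs n))"
    using R by (intro cINF_mono) (auto intro: bdd_belowI2[where m = 0])
  also have "(INF n. H (Xs n)) = 0"
    using H Xs unfolding cont_from_above_def by blast
  finally have "(INF n. R_Max M H (Xs n)) \<le> 0" .
  moreover have "0 \<le> (INF n. R_Max M H (Xs n))"
    using R(1) by (intro cINF_greatest) auto
  ultimately show "(INF n. R_Max M H (Xs n)) = 0"
    by (rule antisym)
qed

theorem corollary3p2: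
  fixes M :: "'a measure" and H :: "('a \<Rightarrow> real) \<Rightarrow> real"
  assumes "premium_principle M H"
    and "convex_on_Bb M H"
    and "cont_from_above M H"
  shows "cont_from_above M (R_Max M H) \<and>
         (\<forall>P\<in>ba1 M. conj_H M H P < \<infinity> \<longrightarrow> countably_additive_fa M P)"
proof -
  have H_nonneg: "\<And>X. X \<in> Bb M \<Longrightarrow> \<forall>x\<in>space M. 0 \<le> X x \<Longrightarrow> 0 \<le> H X"
    using premium_principle_nonneg[OF assms(1)] by blast
  show ?thesis
    using cont_from_above_R_Max[OF H_nonneg assms(3)]
      ba1_empty_continuous_imp_countably_additive
      ba1_empty_continuous_if_conj_H_finite[OF H_nonneg assms(3)]
    by blast
qed

end
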